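(* If $\psi^A_W$ with $A:W\to\{S,I\}$ is a subsystem state belonging to $M_E$ and $|W|>2$, then there exists $X\supseteq W$ such that $D[X]$ is a directed sub-block.
   Context: $D=(V,A)$ is a directed graph on $V=\{1,\dots,N\}$ with rates $T_{ij}\ge0$, $T_{ij}>0$ iff $(j,i)\in A$, $T_{ii}=0$. A subsystem state is $\psi^A_W$ with $W\subseteq V$ nonempty, $A:W\to\{S,I,R\}$; $S_i,I_i$ are single-node states; for $n\notin W$, $\psi^A_WI_n$ is the state on $W\cup\{n\}$ extending $A$ with $n$ in state $I$; $h^X_k(\psi^A_W)$ changes the state of $k\in W$ to $X$. $\mathrm{IN}(X)$ is the set of nodes from which some member of $X$ is reachable by a directed path; $f_E(X,Y,Z)=1$ iff $\mathrm{IN}(X)\cap\mathrm{IN}(Y)=\emptyset$ in $D-Z$ (else $0$), with the convention $f_E(\{n\},\emptyset,\{k\})=0$. A state $\psi^A_W$, $A:W\to\{S,I\}$, induces: $\psi^A_W$; $h^S_k(\psi^A_W)$ for $k\in W$ with $A_k=I$ and $T_{kn}>0$ for some $n\in W$ with $A_n=I$; and for each $k\in W$, $n\in V\setminus W$ with $T_{kn}>0$: the state $h^S_k(\psi^A_W)I_n$ if $f_E(\{n\},W\setminus\{k\},\{k\})=0$, or the states $h^S_k(\psi^A_W)$, $S_kI_n$, $S_k$ if it equals $1$. $M_E$ is the smallest set of subsystem states containing all $S_i,I_i$ and closed under induced states. $D[X]$ is the subgraph induced on $X$. A graph is biconnected if it has at least three vertices, is connected, and remains connected after deleting any single vertex.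 $D[X]$ is a directed sub-block if some node of $X$ is reachable by a directed path within $D[X]$ from every other node of $X$ and the underlying undirected graph of $D[X]$ is biconnected. *)

theory Defs
  imports Complex_Main
begin

datatype nstate = S | I | R

definition verts :: "nat \<Rightarrow> nat set" where
  "verts N = {1..N}"

definition arc :: "nat \<Rightarrow> (nat \<Rightarrow> nat \<Rightarrow> real) \<Rightarrow> nat \<Rightarrow> nat \<Rightarrow> bool" where
  "arc N T j i \<longleftrightarrow> j \<in> verts N \<and> i \<in> verts N \<and> T i j > 0"

text \<open>A subsystem state psi^A_W is a partial map with domain W.\<close>
type_synonym sstate = "nat \<Rightarrow> nstate option"

definition subsystem_state :: "nat \<Rightarrow> sstate \<Rightarrow> bool" where
  "subsystem_state N \<psi> \<longleftrightarrow> dom \<psi> \<noteq> {} \<and> dom \<psi> \<subseteq> verts N"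

definition arcs_minus :: "nat \<Rightarrow> (nat \<Rightarrow> nat \<Rightarrow> real) \<Rightarrow> nat set \<Rightarrow> (nat \<times> nat) set" where
  "arcs_minus N T Z = {(u, v). arc N T u v \<and> u \<notin> Z \<and> v \<notin> Z}"

definition IN :: "nat \<Rightarrow> (nat \<Rightarrow> nat \<Rightarrow> real) \<Rightarrow> nat set \<Rightarrow> nat set \<Rightarrow> nat set" where
  "IN N T Z X = {u. u \<in> verts N - Z \<and> (\<exists>x\<in>X. x \<in> verts N - Z \<and> (u, x) \<in> (arcs_minus N T Z)\<^sup>*)}"

text \<open>f_E(X,Y,Z) as a boolean (True = 1), with the convention f_E({n},{},{k}) = 0.\<close>
definition fE :: "nat \<Rightarrow> (nat \<Rightarrow> nat \<Rightarrow> real) \<Rightarrow> nat set \<Rightarrow> nat set \<Rightarrow> nat set \<Rightarrow> bool" where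
  "fE N T X Y Z \<longleftrightarrow>
     (if (\<exists>n k. X = {n} \<and> Y = {} \<and> Z = {k}) then False
      else IN N T Z X \<inter> IN N T Z Y = {})"

definition induced :: "nat \<Rightarrow> (nat \<Rightarrow> nat \<Rightarrow> real) \<Rightarrow> sstate \<Rightarrow> sstate set" where
  "induced N T \<psi> =
     {\<psi>}
   \<union> {\<psi>(k \<mapsto> S) | k. \<psi> k = Some I \<and> (\<exists>n. \<psi> n = Some I \<and> T k n > 0)}
   \<union> {\<phi>. \<exists>k n. k \<in> dom \<psi> \<and> n \<in> verts N - dom \<psi> \<and> T k n > 0 \<and>
        (if fE N T {n} (dom \<psi> - {k}) {k}
         then \<phi> \<in> {\<psi>(k \<mapsto> S), [k \<mapsto> S, n \<mapsto> I], [k \<mapsto> S]}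
         else \<phi> = \<psi>(k \<mapsto> S, n \<mapsto> I))}"

inductive_set ME :: "nat \<Rightarrow> (nat \<Rightarrow> nat \<Rightarrow> real) \<Rightarrow> sstate set" for N T where
  single_S: "i \<in> verts N \<Longrightarrow> [i \<mapsto> S] \<in> ME N T"
| single_I: "i \<in> verts N \<Longrightarrow> [i \<mapsto> I] \<in> ME N T"
| induce: "\<psi> \<in> ME N T \<Longrightarrow> ran \<psi> \<subseteq> {S, I} \<Longrightarrow> \<phi> \<in> induced N T \<psi> \<Longrightarrow> \<phi> \<in> ME N T"

definition uadj :: "nat \<Rightarrow> (nat \<Rightarrow> nat \<Rightarrow> real) \<Rightarrow> nat set \<Rightarrow> (nat \<times> nat) set" where
  "uadj N T X = {(u, v). u \<in> X \<and> v \<in> X \<and> (arc N T u v \<or> arc N T v u)}"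

definition uconnected :: "nat \<Rightarrow> (nat \<Rightarrow> nat \<Rightarrow> real) \<Rightarrow> nat set \<Rightarrow> bool" where
  "uconnected N T X \<longleftrightarrow> (\<forall>u\<in>X. \<forall>v\<in>X. (u, v) \<in> (uadj N T X)\<^sup>*)"

definition biconnected :: "nat \<Rightarrow> (nat \<Rightarrow> nat \<Rightarrow> real) \<Rightarrow> nat set \<Rightarrow> bool" where
  "biconnected N T X \<longleftrightarrow> finite X \<and> card X \<ge> 3 \<and> uconnected N T X \<and>
     (\<forall>v\<in>X. uconnected N T (X - {v}))"

definition arcs_in :: "nat \<Rightarrow> (nat \<Rightarrow> nat \<Rightarrow> real) \<Rightarrow> nat set \<Rightarrow> (nat \<times> nat) set" where
  "arcs_in N T X = {(u, v). u \<in> X \<and> v \<in> X \<and> arc N T u v}"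

definition directed_subblock :: "nat \<Rightarrow> (nat \<Rightarrow> nat \<Rightarrow> real) \<Rightarrow> nat set \<Rightarrow> bool" where
  "directed_subblock N T X \<longleftrightarrow> X \<subseteq> verts N \<and>
     (\<exists>r\<in>X. \<forall>u\<in>X. (u, r) \<in> (arcs_in N T X)\<^sup>*) \<and> biconnected N T X"

end

theory Submission
  imports Defs "HOL-Library.Transitive_Closure_Table"
begin

text \<open>Call X a weak sub-block if D[X] is rooted (some node is reached from every other one
inside D[X]) and its underlying undirected graph is connected and has no cut vertex; this is a
directed sub-block up to the requirement |X| \<ge> 3. By induction over M_E, the domain of every state
with at least two nodes lies in a weak sub-block. A state grows only by a node n with an arc
n \<rightarrow> k into it, and then only when f_E = 0, i.e. n and some node w \<noteq> k of the state have a common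
ancestor u in D - k. If n lies outside the current weak sub-block X, the paths from u to n and
to w contain an ear through n: a path outside X joining k to another node of X, every vertex of
which reaches X along the ear. Attaching such an ear preserves rootedness and the absence of cut
vertices.\<close>

definition rooted :: "nat \<Rightarrow> (nat \<Rightarrow> nat \<Rightarrow> real) \<Rightarrow> nat set \<Rightarrow> bool" where
  "rooted N T X \<longleftrightarrow> (\<exists>r\<in>X. \<forall>u\<in>X. (u, r) \<in> (arcs_in N T X)\<^sup>*)"

definition weak_subblock :: "nat \<Rightarrow> (nat \<Rightarrow> nat \<Rightarrow> real) \<Rightarrow> nat set \<Rightarrow> bool" where
  "weak_subblock N T X \<longleftrightarrow> X \<subseteq> verts N \<and> rooted N T X \<and>
     uconnected N T X \<and> (\<forall>v\<in>X. uconnected N T (X - {v}))"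

definition uedge :: "nat \<Rightarrow> (nat \<Rightarrow> nat \<Rightarrow> real) \<Rightarrow> nat \<Rightarrow> nat \<Rightarrow> bool" where
  "uedge N T x y \<longleftrightarrow> arc N T x y \<or> arc N T y x"

abbreviation arc_outside :: "nat \<Rightarrow> (nat \<Rightarrow> nat \<Rightarrow> real) \<Rightarrow> nat set \<Rightarrow> nat \<Rightarrow> nat \<Rightarrow> bool" where
  "arc_outside N T X u v \<equiv> (u, v) \<in> arcs_minus N T X"

lemma directed_subblock_if_weak_subblock:
  assumes "weak_subblock N T X" and "W \<subseteq> X" and "2 < card W"
  shows "directed_subblock N T X"
proof -
  have "finite X"
    using assms(1) finite_subset unfolding weak_subblock_def verts_def by blast
  moreover have "3 \<le> card X" using card_mono[OF \<open>finite X\<close> assms(2)] assms(3) by simp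
  ultimately show ?thesis
    using assms(1) unfolding directed_subblock_def biconnected_def weak_subblock_def rooted_def
    by blast
qed

subsection \<open>Undirected connectivity\<close>

lemma successively_uedge_rev [simp]:
  "successively (uedge N T) (rev xs) \<longleftrightarrow> successively (uedge N T) xs"
proof -
  have "(\<lambda>x y. uedge N T y x) = uedge N T"
    by (auto simp: uedge_def fun_eq_iff)
  then show ?thesis by (metis successively_rev)
qed

lemma successively_append_left: "successively P (xs @ ys) \<Longrightarrow> successively P xs"
  by (simp add: successively_append_iff)

lemma successively_join:
  "successively P (xs @ [q]) \<Longrightarrow> successively P (q # ys) \<Longrightarrow> successively P (xs @ q # ys)"
  by (induction xs) (auto simp: successively_Cons hd_append)

lemma set_subset_verts_if_successively_uedge:
  "successively (uedge N T) (xs @ [b]) \<Longrightarrow> set xs \<subseteq> verts N"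
  by (induction xs) (auto simp: successively_Cons uedge_def arc_def)

lemma uadj_rtrancl_mono:
  "(x, y) \<in> (uadj N T A)\<^sup>* \<Longrightarrow> A \<subseteq> B \<Longrightarrow> (x, y) \<in> (uadj N T B)\<^sup>*"
  using rtrancl_mono[of "uadj N T A" "uadj N T B"] unfolding uadj_def by blast

lemma uadj_rtrancl_sym:
  assumes "(x, y) \<in> (uadj N T Y)\<^sup>*"
  shows "(y, x) \<in> (uadj N T Y)\<^sup>*"
proof -
  have "sym (uadj N T Y)" unfolding sym_def uadj_def by auto
  then show ?thesis using assms sym_rtrancl by (metis symD)
qed

lemma uconnectedI:
  assumes "\<And>z. z \<in> Y \<Longrightarrow> (z, c) \<in> (uadj N T Y)\<^sup>*"
  shows "uconnected N T Y"
  unfolding uconnected_def using assms uadj_rtrancl_sym rtrancl_trans by metis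

lemma uadj_rtrancl_along_chain:
  "successively (uedge N T) (a # q) \<Longrightarrow> set (a # q) \<subseteq> Y \<Longrightarrow> z \<in> set (a # q) \<Longrightarrow>
    (z, a) \<in> (uadj N T Y)\<^sup>*"
proof (induction q arbitrary: a)
  case Nil
  then show ?case by simp
next
  case (Cons b q)
  show ?case
  proof (cases "z = a")
    case False
    then have "(z, b) \<in> (uadj N T Y)\<^sup>*" using Cons by simp
    moreover have "(b, a) \<in> uadj N T Y"
      using Cons.prems unfolding uadj_def uedge_def by auto
    ultimately show ?thesis by (rule rtrancl_into_rtrancl)
  qed simp
qed

lemma uconnected_attach_chain:
  assumes "uconnected N T Y" and "a \<in> Y" and "successively (uedge N T) (a # e)"
  shows "uconnected N T (Y \<union> set e)"
proof (rule uconnectedI)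
  fix z assume "z \<in> Y \<union> set e"
  then show "(z, a) \<in> (uadj N T (Y \<union> set e))\<^sup>*"
  proof
    assume "z \<in> Y"
    then have "(z, a) \<in> (uadj N T Y)\<^sup>*" using assms(1,2) unfolding uconnected_def by blast
    then show ?thesis by (rule uadj_rtrancl_mono) blast
  next
    assume "z \<in> set e"
    then show ?thesis using uadj_rtrancl_along_chain[OF assms(3)] assms(2) by auto
  qed
qed

lemma uconnected_delete_from_ear:
  assumes no_cut: "\<forall>v\<in>X. uconnected N T (X - {v})" and conn: "uconnected N T X"
    and "a \<in> X" "b \<in> X" "a \<noteq> b" "distinct e" "set e \<inter> X = {}"
    and chain: "successively (uedge N T) (a # e @ [b])"
    and v: "v \<in> X \<union> set e"
  shows "uconnected N T (X \<union> set e - {v})"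
proof -
  have chain_rev: "successively (uedge N T) (b # rev e @ [a])"
    using chain successively_uedge_rev[of N T "a # e @ [b]"] by simp
  consider "v \<in> X" "v \<noteq> a" | "v = a" | e1 e2 where "e = e1 @ v # e2"
    using v by (metis Un_iff split_list)
  then show ?thesis
  proof cases
    case 1
    have "successively (uedge N T) (a # e)"
      using chain successively_append_left[of _ "a # e"] by simp
    then have "uconnected N T (X - {v} \<union> set e)"
      using uconnected_attach_chain no_cut 1 \<open>a \<in> X\<close> by blast
    moreover have "X - {v} \<union> set e = X \<union> set e - {v}" using 1 \<open>set e \<inter> X = {}\<close> by blast
    ultimately show ?thesis by simp
  next
    case 2
    have "successively (uedge N T) (b # rev e)"
      using chain_rev successively_append_left[of _ "b # rev e"] by simp
    then have "uconnected N T (X - {a} \<union> set (rev e))"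
      using uconnected_attach_chain no_cut \<open>a \<in> X\<close> \<open>b \<in> X\<close> \<open>a \<noteq> b\<close> by blast
    moreover have "X - {a} \<union> set (rev e) = X \<union> set e - {v}"
      using 2 \<open>a \<in> X\<close> \<open>set e \<inter> X = {}\<close> by auto
    ultimately show ?thesis by simp
  next
    case 3
    text \<open>Attach both halves of the broken ear, each from its own end in X.\<close>
    have "successively (uedge N T) (a # e1)"
      using chain 3 successively_append_left[of _ "a # e1"] by simp
    then have "uconnected N T (X \<union> set e1)"
      using uconnected_attach_chain conn \<open>a \<in> X\<close> by blast
    moreover have "successively (uedge N T) (b # rev e2)"
      using chain_rev 3 successively_append_left[of _ "b # rev e2"] by simp
    ultimately have "uconnected N T (X \<union> set e1 \<union> set (rev e2))"
      using uconnected_attach_chain \<open>b \<in> X\<close> by blast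
    moreover have "X \<union> set e1 \<union> set (rev e2) = X \<union> set e - {v}"
      using 3 \<open>distinct e\<close> \<open>set e \<inter> X = {}\<close> by auto
    ultimately show ?thesis by simp
  qed
qed

subsection \<open>Attaching an ear\<close>

lemma arcs_in_rtrancl_mono:
  "(x, y) \<in> (arcs_in N T A)\<^sup>* \<Longrightarrow> A \<subseteq> B \<Longrightarrow> (x, y) \<in> (arcs_in N T B)\<^sup>*"
  using rtrancl_mono[of "arcs_in N T A" "arcs_in N T B"] unfolding arcs_in_def by blast

lemma rooted_Un:
  assumes "rooted N T X"
    and reach: "\<And>z. z \<in> Y \<Longrightarrow> \<exists>t\<in>X. (z, t) \<in> (arcs_in N T (X \<union> Y))\<^sup>*"
  shows "rooted N T (X \<union> Y)"
proof -
  obtain r where r: "r \<in> X" "\<And>u. u \<in> X \<Longrightarrow> (u, r) \<in> (arcs_in N T X)\<^sup>*"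
    using assms(1) unfolding rooted_def by blast
  then have to_r: "(u, r) \<in> (arcs_in N T (X \<union> Y))\<^sup>*" if "u \<in> X" for u
    using that arcs_in_rtrancl_mono by blast
  have "(u, r) \<in> (arcs_in N T (X \<union> Y))\<^sup>*" if "u \<in> X \<union> Y" for u
    using that to_r reach rtrancl_trans by (metis Un_iff)
  then show ?thesis unfolding rooted_def using r(1) by blast
qed

lemma weak_subblock_add_ear:
  assumes X: "weak_subblock N T X"
    and "a \<in> X" "b \<in> X" "a \<noteq> b" "distinct e" "set e \<inter> X = {}"
    and chain: "successively (uedge N T) (a # e @ [b])"
    and reach: "\<And>z. z \<in> set e \<Longrightarrow> \<exists>t\<in>X. (z, t) \<in> (arcs_in N T (X \<union> set e))\<^sup>*"
  shows "weak_subblock N T (X \<union> set e)"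
proof -
  have "set e \<subseteq> verts N"
    using set_subset_verts_if_successively_uedge[of N T "a # e"] chain by simp
  moreover have "rooted N T (X \<union> set e)"
    using X reach rooted_Un unfolding weak_subblock_def by blast
  moreover have "uconnected N T (X \<union> set e)"
    using X chain uconnected_attach_chain[of N T X a e] successively_append_left[of _ "a # e"]
      \<open>a \<in> X\<close>
    unfolding weak_subblock_def by simp
  moreover have "\<forall>v\<in>X \<union> set e. uconnected N T (X \<union> set e - {v})"
    using X uconnected_delete_from_ear assms(2-7) unfolding weak_subblock_def by blast
  ultimately show ?thesis using X unfolding weak_subblock_def by blast
qed

lemma weak_subblock_pair:
  assumes "arc N T n k" and "n \<noteq> k"
  shows "weak_subblock N T {k, n}"
proof -
  have "(n, k) \<in> arcs_in N T {k, n}" using assms(1) unfolding arcs_in_def by auto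
  then have "rooted N T {k, n}" unfolding rooted_def by blast
  moreover have "(n, k) \<in> uadj N T {k, n}" using assms(1) unfolding uadj_def by auto
  then have "uconnected N T {k, n}" by (intro uconnectedI[where c = k]) auto
  moreover have "uconnected N T ({k, n} - {v})" if "v \<in> {k, n}" for v
    using that unfolding uconnected_def by auto
  ultimately show ?thesis
    using assms(1) unfolding weak_subblock_def arc_def by blast
qed

subsection \<open>Finding an ear\<close>

lemma rtrancl_path_end_in_set: "rtrancl_path r x xs y \<Longrightarrow> y \<in> set (x # xs)"
  by (induction rule: rtrancl_path.induct) auto

lemma rtranclp_fork:
  assumes "r\<^sup>*\<^sup>* c a" and "r\<^sup>*\<^sup>* c b"
  obtains q ps qs where "r\<^sup>*\<^sup>* c q" "rtrancl_path r q ps a" "rtrancl_path r q qs b"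
    "distinct (q # ps @ qs)"
proof -
  text \<open>Branch at the start q of a shortest path to a among the nodes reachable from c that
    reach b: a node shared by both branches would be a start with a shorter path.\<close>
  define start where "start = (\<lambda>(q, ps). r\<^sup>*\<^sup>* c q \<and> r\<^sup>*\<^sup>* q b \<and> rtrancl_path r q ps a \<and> distinct (q # ps))"
  obtain ps0 where "rtrancl_path r c ps0 a"
    using assms(1) rtranclp_eq_rtrancl_path by metis
  then obtain ps0 where "rtrancl_path r c ps0 a" "distinct (c # ps0)"
    by (rule rtrancl_path_distinct)
  then have "start (c, ps0)" unfolding start_def using assms(2) by simp
  then obtain q ps where qps: "start (q, ps)"
    and shortest: "\<And>q' ps'. start (q', ps') \<Longrightarrow> length ps \<le> length ps'"
    using ex_has_least_nat[of start "(c, ps0)" "\<lambda>p. length (snd p)"] by auto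
  then have cq: "r\<^sup>*\<^sup>* c q" and "r\<^sup>*\<^sup>* q b" and pa: "rtrancl_path r q ps a" and dps: "distinct (q # ps)"
    unfolding start_def by auto
  then obtain qs where "rtrancl_path r q qs b"
    using rtranclp_eq_rtrancl_path by metis
  then obtain qs where qb: "rtrancl_path r q qs b" and dqs: "distinct (q # qs)"
    by (rule rtrancl_path_distinct)
  have "set ps \<inter> set qs = {}"
  proof (rule ccontr)
    assume "set ps \<inter> set qs \<noteq> {}"
    then obtain p ps1 ps2 qs1 qs2 where ps: "ps = ps1 @ p # ps2" and qs: "qs = qs1 @ p # qs2"
      by (metis disjoint_iff split_list)
    have "rtrancl_path r p ps2 a" using pa ps by (auto elim: rtrancl_path_appendE)
    moreover obtain "rtrancl_path r q (qs1 @ [p]) p" "rtrancl_path r p qs2 b"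
      using qb qs rtrancl_path_appendE by metis
    then have "r\<^sup>*\<^sup>* q p" "r\<^sup>*\<^sup>* p b" using rtranclp_eq_rtrancl_path by metis+
    then have "r\<^sup>*\<^sup>* c p" "r\<^sup>*\<^sup>* p b" using cq by auto
    ultimately have "start (p, ps2)" unfolding start_def using dps ps by auto
    then show False using shortest[of p ps2] ps by simp
  qed
  then show ?thesis using that cq pa qb dps dqs by auto
qed

lemma rtrancl_path_outside_disjoint:
  "rtrancl_path (arc_outside N T X) x xs y \<Longrightarrow> set xs \<inter> X = {}"
  by (induction rule: rtrancl_path.induct) (auto simp: arcs_minus_def)

lemma entering_path_chain:
  "rtrancl_path (arc_outside N T X) x xs y \<Longrightarrow> arc N T y t \<Longrightarrow>
    successively (uedge N T) (x # xs @ [t])"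
  by (induction rule: rtrancl_path.induct) (auto simp: uedge_def arcs_minus_def)

lemma entering_path_reach:
  assumes "rtrancl_path (arc_outside N T X) x xs y" and "arc N T y t" and "z \<in> set (x # xs)"
  shows "(z, t) \<in> (arcs_in N T (insert t (set (x # xs))))\<^sup>*"
  using assms
proof (induction arbitrary: z rule: rtrancl_path.induct)
  case (base x)
  then show ?case unfolding arcs_in_def by auto
next
  case (step x y ys y')
  have sub: "insert t (set (y # ys)) \<subseteq> insert t (set (x # y # ys))" by auto
  have "(y, t) \<in> (arcs_in N T (insert t (set (x # y # ys))))\<^sup>*"
    using step.IH[of y] step.prems(1) arcs_in_rtrancl_mono[OF _ sub] by simp
  moreover have "(x, y) \<in> arcs_in N T (insert t (set (x # y # ys)))"
    using step.hyps(1) unfolding arcs_in_def arcs_minus_def by auto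
  moreover have "z = x \<or> (z, t) \<in> (arcs_in N T (insert t (set (x # y # ys))))\<^sup>*"
    using step.IH[of z] step.prems arcs_in_rtrancl_mono[OF _ sub] by auto
  ultimately show ?case by (meson converse_rtrancl_into_rtrancl)
qed

lemma outside_rtranclp_notin:
  "(arc_outside N T X)\<^sup>*\<^sup>* u q \<Longrightarrow> u \<notin> X \<Longrightarrow> q \<notin> X"
  by (induction rule: rtranclp_induct) (auto simp: arcs_minus_def)

lemma weak_subblock_extend_by_exit:
  assumes X: "weak_subblock N T X" and "c \<in> X" "k \<in> X" "c \<noteq> k"
    and "arc N T c y" "y \<notin> X" "(arc_outside N T X)\<^sup>*\<^sup>* y n" and nk: "arc N T n k"
  shows "\<exists>X'. insert n X \<subseteq> X' \<and> weak_subblock N T X'"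
proof -
  obtain ps where "rtrancl_path (arc_outside N T X) y ps n"
    using assms(7) rtranclp_eq_rtrancl_path by metis
  then obtain ps where path: "rtrancl_path (arc_outside N T X) y ps n" and "distinct (y # ps)"
    by (rule rtrancl_path_distinct)
  define e where "e = y # ps"
  have chain: "successively (uedge N T) (c # e @ [k])"
    using entering_path_chain[OF path nk] \<open>arc N T c y\<close> unfolding e_def uedge_def by simp
  have disjoint: "set e \<inter> X = {}"
    using rtrancl_path_outside_disjoint[OF path] \<open>y \<notin> X\<close> unfolding e_def by auto
  have reach: "\<exists>t\<in>X. (z, t) \<in> (arcs_in N T (X \<union> set e))\<^sup>*" if "z \<in> set e" for z
  proof -
    have "(z, k) \<in> (arcs_in N T (insert k (set e)))\<^sup>*"
      using entering_path_reach[OF path nk] that unfolding e_def by blast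
    moreover have "insert k (set e) \<subseteq> X \<union> set e" using \<open>k \<in> X\<close> by blast
    ultimately show ?thesis using arcs_in_rtrancl_mono[of z k] \<open>k \<in> X\<close> by blast
  qed
  have "distinct e" using \<open>distinct (y # ps)\<close> unfolding e_def .
  have "weak_subblock N T (X \<union> set e)"
    by (rule weak_subblock_add_ear[OF X \<open>c \<in> X\<close> \<open>k \<in> X\<close> \<open>c \<noteq> k\<close> \<open>distinct e\<close> disjoint
          chain reach])
  moreover have "n \<in> set e" using rtrancl_path_end_in_set[OF path] unfolding e_def .
  ultimately show ?thesis by blast
qed

lemma weak_subblock_extend_by_fork:
  assumes X: "weak_subblock N T X" and "k \<in> X" "x \<in> X" "x \<noteq> k" and "u \<notin> X"
    and "(arc_outside N T X)\<^sup>*\<^sup>* u n" "(arc_outside N T X)\<^sup>*\<^sup>* u y"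
    and yx: "arc N T y x" and nk: "arc N T n k"
  shows "\<exists>X'. insert n X \<subseteq> X' \<and> weak_subblock N T X'"
proof -
  obtain q ps qs where "(arc_outside N T X)\<^sup>*\<^sup>* u q"
    and to_n: "rtrancl_path (arc_outside N T X) q ps n"
    and to_y: "rtrancl_path (arc_outside N T X) q qs y" and dist: "distinct (q # ps @ qs)"
    using rtranclp_fork[OF assms(6,7)] by blast
  then have "q \<notin> X" using outside_rtranclp_notin \<open>u \<notin> X\<close> by blast
  define e where "e = rev qs @ q # ps"
  have "successively (uedge N T) (x # rev qs @ [q])"
    using entering_path_chain[OF to_y yx] successively_uedge_rev[of N T "q # qs @ [x]"] by simp
  then have chain: "successively (uedge N T) (x # e @ [k])"
    using successively_join[of _ "x # rev qs"] entering_path_chain[OF to_n nk] unfolding e_def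
    by simp
  have disjoint: "set e \<inter> X = {}"
    using rtrancl_path_outside_disjoint[OF to_n] rtrancl_path_outside_disjoint[OF to_y] \<open>q \<notin> X\<close>
    unfolding e_def by auto
  have "distinct e" using dist unfolding e_def by auto
  have reach: "\<exists>t\<in>X. (z, t) \<in> (arcs_in N T (X \<union> set e))\<^sup>*" if "z \<in> set e" for z
  proof -
    have "z \<in> set (q # ps) \<or> z \<in> set (q # qs)" using that unfolding e_def by auto
    then show ?thesis
    proof
      assume "z \<in> set (q # ps)"
      then have "(z, k) \<in> (arcs_in N T (insert k (set (q # ps))))\<^sup>*"
        by (rule entering_path_reach[OF to_n nk])
      moreover have "insert k (set (q # ps)) \<subseteq> X \<union> set e" using \<open>k \<in> X\<close> unfolding e_def by auto
      ultimately show ?thesis using arcs_in_rtrancl_mono[of z k] \<open>k \<in> X\<close> by blast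
    next
      assume "z \<in> set (q # qs)"
      then have "(z, x) \<in> (arcs_in N T (insert x (set (q # qs))))\<^sup>*"
        by (rule entering_path_reach[OF to_y yx])
      moreover have "insert x (set (q # qs)) \<subseteq> X \<union> set e" using \<open>x \<in> X\<close> unfolding e_def by auto
      ultimately show ?thesis using arcs_in_rtrancl_mono[of z x] \<open>x \<in> X\<close> by blast
    qed
  qed
  have "weak_subblock N T (X \<union> set e)"
    by (rule weak_subblock_add_ear[OF X \<open>x \<in> X\<close> \<open>k \<in> X\<close> \<open>x \<noteq> k\<close> \<open>distinct e\<close> disjoint
          chain reach])
  moreover have "n \<in> set e" using rtrancl_path_end_in_set[OF to_n] unfolding e_def by auto
  ultimately show ?thesis by blast
qed

lemma avoiding_path_last_exit:
  assumes "(u, n) \<in> (arcs_minus N T {k})\<^sup>*" and "n \<notin> X"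
  shows "(\<exists>c y. c \<in> X \<and> c \<noteq> k \<and> arc N T c y \<and> y \<notin> X \<and> (arc_outside N T X)\<^sup>*\<^sup>* y n) \<or>
    (u \<notin> X \<and> (arc_outside N T X)\<^sup>*\<^sup>* u n)"
  using assms(1)
proof (induction rule: converse_rtrancl_induct)
  case base
  then show ?case using assms(2) by auto
next
  case (step y z)
  then have "arc N T y z" "y \<noteq> k" unfolding arcs_minus_def by auto
  with step.IH show ?case
    by (cases "y \<in> X") (auto simp: arcs_minus_def intro: converse_rtranclp_into_rtranclp)
qed

lemma avoiding_path_first_entry:
  assumes "(u, w) \<in> (arcs_minus N T {k})\<^sup>*" and "w \<in> X" "w \<noteq> k" and "u \<notin> X"
  shows "\<exists>y x. (arc_outside N T X)\<^sup>*\<^sup>* u y \<and> arc N T y x \<and> x \<in> X \<and> x \<noteq> k"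
  using assms(1,4)
proof (induction rule: converse_rtrancl_induct)
  case base
  then show ?case using assms(2) by blast
next
  case (step y z)
  then have "arc N T y z" "z \<noteq> k" unfolding arcs_minus_def by auto
  with step show ?case
    by (cases "z \<in> X") (auto simp: arcs_minus_def intro: converse_rtranclp_into_rtranclp)
qed

lemma weak_subblock_extend:
  assumes X: "weak_subblock N T X" and "k \<in> X" "n \<notin> X" and nk: "arc N T n k"
    and "(u, n) \<in> (arcs_minus N T {k})\<^sup>*" "(u, w) \<in> (arcs_minus N T {k})\<^sup>*" "w \<in> X" "w \<noteq> k"
  shows "\<exists>X'. insert n X \<subseteq> X' \<and> weak_subblock N T X'"
  using avoiding_path_last_exit[OF assms(5,3)]
proof
  assume "\<exists>c y. c \<in> X \<and> c \<noteq> k \<and> arc N T c y \<and> y \<notin> X \<and> (arc_outside N T X)\<^sup>*\<^sup>* y n"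
  then show ?thesis using weak_subblock_extend_by_exit[OF X _ \<open>k \<in> X\<close> _ _ _ _ nk] by blast
next
  assume u: "u \<notin> X \<and> (arc_outside N T X)\<^sup>*\<^sup>* u n"
  then obtain y x where "(arc_outside N T X)\<^sup>*\<^sup>* u y" "arc N T y x" "x \<in> X" "x \<noteq> k"
    using avoiding_path_first_entry[OF assms(6-8)] by blast
  then show ?thesis using weak_subblock_extend_by_fork[OF X \<open>k \<in> X\<close> _ _ _ _ _ _ nk] u by blast
qed

lemma weak_subblock_insert:
  assumes X: "weak_subblock N T X" and "W \<subseteq> X" "2 \<le> card W" "k \<in> W" "n \<notin> W"
    and nk: "arc N T n k" and "\<not> fE N T {n} (W - {k}) {k}"
  shows "\<exists>X'. insert n W \<subseteq> X' \<and> weak_subblock N T X'"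
proof (cases "n \<in> X")
  case True
  then show ?thesis using X \<open>W \<subseteq> X\<close> by blast
next
  case False
  have "W - {k} \<noteq> {}"
  proof
    assume "W - {k} = {}"
    then have "card W \<le> card {k}" by (intro card_mono) auto
    then show False using \<open>2 \<le> card W\<close> by simp
  qed
  then have "IN N T {k} {n} \<inter> IN N T {k} (W - {k}) \<noteq> {}"
    using assms(7) unfolding fE_def by auto
  then obtain u w where "(u, n) \<in> (arcs_minus N T {k})\<^sup>*" "(u, w) \<in> (arcs_minus N T {k})\<^sup>*"
    and "w \<in> W" "w \<noteq> k"
    unfolding IN_def by blast
  moreover have "k \<in> X" "w \<in> X" using assms(2,4) \<open>w \<in> W\<close> by auto
  ultimately obtain X' where "insert n X \<subseteq> X'" "weak_subblock N T X'"
    using weak_subblock_extend[OF X _ False nk] by meson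
  then show ?thesis using \<open>W \<subseteq> X\<close> by blast
qed

subsection \<open>The invariant of M_E\<close>

lemma dom_induced:
  assumes "\<phi> \<in> induced N T \<psi>"
  obtains "dom \<phi> = dom \<psi>"
  | k n where "k \<in> dom \<psi>" "n \<in> verts N - dom \<psi>" "T k n > 0" "dom \<phi> \<subseteq> {k, n}"
  | k n where "k \<in> dom \<psi>" "n \<in> verts N - dom \<psi>" "T k n > 0" "dom \<phi> = insert n (dom \<psi>)"
      "\<not> fE N T {n} (dom \<psi> - {k}) {k}"
proof -
  consider "\<phi> = \<psi>" | k where "\<phi> = \<psi>(k \<mapsto> S)" "\<psi> k = Some I"
    | k n where "k \<in> dom \<psi>" "n \<in> verts N - dom \<psi>" "T k n > 0"
      "if fE N T {n} (dom \<psi> - {k}) {k}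
       then \<phi> \<in> {\<psi>(k \<mapsto> S), [k \<mapsto> S, n \<mapsto> I], [k \<mapsto> S]}
       else \<phi> = \<psi>(k \<mapsto> S, n \<mapsto> I)"
    using assms unfolding induced_def by blast
  then show ?thesis
  proof cases
    case (3 k n)
    show ?thesis
    proof (cases "fE N T {n} (dom \<psi> - {k}) {k}")
      case True
      then have "\<phi> \<in> {\<psi>(k \<mapsto> S), [k \<mapsto> S, n \<mapsto> I], [k \<mapsto> S]}" using 3(4) by simp
      moreover have "dom (\<psi>(k \<mapsto> S)) = dom \<psi>" using 3(1) by auto
      ultimately have "dom \<phi> = dom \<psi> \<or> dom \<phi> \<subseteq> {k, n}" by auto
      then show ?thesis using that(1) that(2)[OF 3(1-3)] by blast
    next
      case False
      then show ?thesis using 3 that(3) by auto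
    qed
  qed (use that(1) in auto)
qed

lemma ME_dom_subset_verts: "\<psi> \<in> ME N T \<Longrightarrow> dom \<psi> \<subseteq> verts N"
proof (induction rule: ME.induct)
  case (induce \<psi> \<phi>)
  from induce.hyps(3) show ?case
    by (cases rule: dom_induced) (use induce.IH in auto)
qed (auto split: if_splits)

lemma ME_weak_subblock:
  assumes "\<psi> \<in> ME N T" and "2 \<le> card (dom \<psi>)"
  shows "\<exists>X. dom \<psi> \<subseteq> X \<and> weak_subblock N T X"
  using assms
proof (induction rule: ME.induct)
  case (induce \<psi> \<phi>)
  have dom_verts: "dom \<psi> \<subseteq> verts N" by (rule ME_dom_subset_verts[OF induce.hyps(1)])
  have arc_new: "arc N T n k" "n \<noteq> k" if "k \<in> dom \<psi>" "n \<in> verts N - dom \<psi>" "T k n > 0" for k n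
    using that dom_verts unfolding arc_def by auto
  from induce.hyps(3) show ?case
  proof (cases rule: dom_induced)
    case 1
    then show ?thesis using induce by simp
  next
    case (2 k n)
    then show ?thesis using weak_subblock_pair[OF arc_new[OF 2(1-3)]] by blast
  next
    case (3 k n)
    show ?thesis
    proof (cases "2 \<le> card (dom \<psi>)")
      case True
      then obtain X where "dom \<psi> \<subseteq> X" "weak_subblock N T X" using induce.IH by blast
      then show ?thesis using weak_subblock_insert[OF _ _ True 3(1) _ arc_new(1)[OF 3(1-3)] 3(5)] 3 by auto
    next
      case False
      have "finite (dom \<psi>)" using dom_verts finite_subset unfolding verts_def by blast
      moreover have "card (dom \<psi>) \<le> Suc 0" using False by simp
      ultimately have "dom \<psi> = {k}" using card_le_Suc0_iff_eq 3(1) by blast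
      then show ?thesis using weak_subblock_pair[OF arc_new[OF 3(1-3)]] 3(4) by auto
    qed
  qed
qed auto

theorem mainTheorem8:
  fixes N :: nat and T :: "nat \<Rightarrow> nat \<Rightarrow> real" and \<psi> :: sstate
  assumes "\<forall>i\<in>verts N. \<forall>j\<in>verts N. T i j \<ge> 0"
    and "\<forall>i\<in>verts N. T i i = 0"
    and "\<psi> \<in> ME N T"
    and "ran \<psi> \<subseteq> {S, I}"
    and "card (dom \<psi>) > 2"
  shows "\<exists>X. dom \<psi> \<subseteq> X \<and> directed_subblock N T X"
proof -
  obtain X where "dom \<psi> \<subseteq> X" "weak_subblock N T X"
    using ME_weak_subblock[OF assms(3)] assms(5) by fastforce
  then show ?thesis using directed_subblock_if_weak_subblock assms(5) by blast
qed

end
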